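(* For every $p\in I$, the Dirac mass $\mu_p\in\mathcal{S}(p)$ (no information disclosure) attains the maximum in $V_\delta(p)=\max_{\mu\in\mathcal{S}(p)}\{(1-\delta)\mu(\{q\in I\})+\delta\,\mathbb{E}_\mu[V_\delta(\phi(q))]\}$; that is, at any $p\in I$ it is optimal for the advisor not to provide information.
   Context: Let $\Omega$ be a finite set, identify each $\omega$ with a unit vector of $\mathbb{R}^\Omega$ and $\Delta(\Omega)$ with the unit simplex. Let $M$ be the transition matrix of an irreducible Markov chain on $\Omega$, $r:\Omega\to\mathbb{R}$, $\delta\in[0,1)$. Let $I=\{p\in\Delta(\Omega):\sum_\omega p(\omega)r(\omega)\ge0\}$ and $\phi(q)=qM$. $\mathcal{S}(p)$ is the set of Borel probability measures on $\Delta(\Omega)$ with mean $p$ and $\mu_p$ the Dirac mass at $p$. $V_\delta$ is the value of the advisor's problem: at each stage, at belief $p_n$, choose $\mu\in\mathcal{S}(p_n)$, draw a posterior $q_n\sim\mu$, receive $\mathbf{1}_{\{q_n\in I\}}$, and move to $p_{n+1}=\phi(q_n)$, with payoff $\mathbb{E}[(1-\delta)\sum_n\delta^{n-1}\mathbf{1}_{\{q_n\in I\}}]$; $V_\delta$ is the unique solution of the dynamic programming equation in the claim. *)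

theory Defs
  imports "HOL-Probability.Probability"
begin

text \<open>States: a finite type 'w. Beliefs are vectors in real^'w; Delta(Omega) is the unit belief_simplex.\<close>

definition belief_simplex :: "(real^'w::finite) set" where
  "belief_simplex = {p. (\<forall>w. 0 \<le> p $ w) \<and> (\<Sum>w\<in>UNIV. p $ w) = 1}"

definition stochastic :: "real^'w^'w::finite \<Rightarrow> bool" where
  "stochastic M = ((\<forall>i j. 0 \<le> M $ i $ j) \<and> (\<forall>i. (\<Sum>j\<in>UNIV. M $ i $ j) = 1))"

definition irreducible_chain :: "real^'w^'w::finite \<Rightarrow> bool" where
  "irreducible_chain M = (\<forall>i j. (i, j) \<in> {(a, b). 0 < M $ a $ b}\<^sup>*)"

definition phi :: "real^'w^'w::finite \<Rightarrow> real^'w \<Rightarrow> real^'w" where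
  "phi M q = q v* M"

definition Iset :: "('w::finite \<Rightarrow> real) \<Rightarrow> (real^'w) set" where
  "Iset r = {p \<in> belief_simplex. 0 \<le> (\<Sum>w\<in>UNIV. p $ w * r w)}"

text \<open>S(p): Borel probability measures on Delta(Omega) (i.e. concentrated on the simplex)
  with mean p.\<close>

definition splits :: "real^'w::finite \<Rightarrow> (real^'w) measure set" where
  "splits p = {\<mu>. sets \<mu> = sets borel \<and> prob_space \<mu> \<and> emeasure \<mu> belief_simplex = 1
                 \<and> integrable \<mu> (\<lambda>q. q) \<and> integral\<^sup>L \<mu> (\<lambda>q. q) = p}"

definition dp_obj :: "real \<Rightarrow> real^'w^'w::finite \<Rightarrow> ('w \<Rightarrow> real) \<Rightarrow> (real^'w \<Rightarrow> real)
                      \<Rightarrow> (real^'w) measure \<Rightarrow> real" where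
  "dp_obj \<delta> M r V \<mu> = (1 - \<delta>) * measure \<mu> (Iset r) + \<delta> * integral\<^sup>L \<mu> (\<lambda>q. V (phi M q))"

end

theory Submission
  imports Defs
begin

text \<open>Mixing optimal splittings of two beliefs yields a splitting of their convex combination,
  so the dynamic programming equation forces \<open>V\<close> to be concave on the simplex; since \<open>\<phi>\<close> is
  linear, \<open>V \<circ> \<phi>\<close> is concave too. For an optimal splitting \<open>\<mu>\<close> of \<open>p\<close>, Jensen's inequality
  bounds the continuation value by \<open>V (\<phi> p)\<close>, and the stage payoff is at most \<open>1\<close>; hence
  \<open>V p \<le> (1 - \<delta>) + \<delta> V (\<phi> p)\<close>, which is exactly the value of disclosing nothing when \<open>p \<in> I\<close>.
  Jensen's inequality for a possibly boundary point \<open>p\<close> is obtained from a supergradient at \<open>p\<close>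
  of the concave function pulled back along an affine retraction onto the face of \<open>p\<close>, in whose
  domain \<open>p\<close> is interior.\<close>

lemma belief_simplex_borel [measurable]: "belief_simplex \<in> sets (borel :: (real^'w::finite) measure)"
  unfolding belief_simplex_def by measurable

lemma Iset_borel [measurable]: "Iset r \<in> sets (borel :: (real^'w::finite) measure)"
  unfolding Iset_def belief_simplex_def by measurable

lemma convex_belief_simplex: "convex belief_simplex"
proof (rule convexI)
  fix x y :: "real^'w" and u v :: real
  assume "x \<in> belief_simplex" "y \<in> belief_simplex" "0 \<le> u" "0 \<le> v" "u + v = 1"
  then show "u *\<^sub>R x + v *\<^sub>R y \<in> belief_simplex"
    by (simp add: belief_simplex_def sum.distrib flip: sum_distrib_left)
qed

lemma norm_le_1_belief_simplex: "q \<in> belief_simplex \<Longrightarrow> norm q \<le> 1"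
  using norm_le_l1_cart[of q] by (auto simp: belief_simplex_def)

lemma linear_phi: "linear (phi M)"
  unfolding phi_def using matrix_vector_mul_linear[of "transpose M"] by simp

lemma borel_measurable_phi [measurable]: "phi M \<in> borel_measurable borel"
  by (intro borel_measurable_continuous_onI linear_continuous_on linear_conv_bounded_linear[THEN iffD1] linear_phi)

lemma phi_belief_simplex:
  assumes "stochastic M" "q \<in> belief_simplex"
  shows "phi M q \<in> belief_simplex"
proof -
  have "(\<Sum>j\<in>UNIV. \<Sum>i\<in>UNIV. q $ i * M $ i $ j) = (\<Sum>i\<in>UNIV. q $ i * (\<Sum>j\<in>UNIV. M $ i $ j))"
    by (subst sum.swap) (simp add: sum_distrib_left)
  also have "\<dots> = 1" using assms by (simp add: stochastic_def belief_simplex_def)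
  finally show ?thesis using assms
    by (simp add: belief_simplex_def stochastic_def phi_def vector_matrix_mult_def sum_nonneg)
qed

lemma integral_vec_nth:
  fixes m :: "(real^'w::finite) measure"
  assumes "integrable m (\<lambda>q. q)"
  shows "(integral\<^sup>L m (\<lambda>q. q)) $ w = integral\<^sup>L m (\<lambda>q. q $ w)"
  using integral_inner_right[of "axis w 1" m "\<lambda>q. q"] assms
  by (simp add: cart_eq_inner_axis inner_commute)

lemma splitsD:
  assumes "\<mu> \<in> splits p"
  shows "sets \<mu> = sets borel" "prob_space \<mu>" "AE q in \<mu>. q \<in> belief_simplex"
    "integrable \<mu> (\<lambda>q. q)" "integral\<^sup>L \<mu> (\<lambda>q. q) = p"
proof -
  show sets: "sets \<mu> = sets borel" and "prob_space \<mu>" "integrable \<mu> (\<lambda>q. q)" "integral\<^sup>L \<mu> (\<lambda>q. q) = p"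
    using assms by (auto simp: splits_def)
  then interpret prob_space \<mu> by simp
  have "prob belief_simplex = 1"
    using assms by (simp add: splits_def measure_def)
  then show "AE q in \<mu>. q \<in> belief_simplex"
    using sets by (intro AE_prob_1) auto
qed

lemma return_splits:
  assumes "p \<in> belief_simplex"
  shows "return borel p \<in> splits p"
proof -
  interpret prob_space "return borel p" by (rule prob_space_return) simp
  have "integrable (return borel p) (\<lambda>q. q)"
    by (rule integrable_const_bound[where B="norm p"]) (simp_all add: AE_return)
  moreover have "integral\<^sup>L (return borel p) (\<lambda>q. q) = p"
    by (rule integral_return) auto
  moreover have "emeasure (return borel p) belief_simplex = 1"
    using assms by simp
  ultimately show ?thesis
    unfolding splits_def using prob_space_axioms by simp
qed

lemma integral_eq_on_belief_simplex:
  fixes m :: "(real^'w::finite) measure"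
  assumes "AE q in m. q \<in> belief_simplex" "sets m = sets borel" "f \<in> borel_measurable borel"
  shows "integral\<^sup>L m f = integral\<^sup>L m (\<lambda>q. if q \<in> belief_simplex then f q else 0)"
  using assms by (intro integral_cong_AE) (auto simp: measurable_cong_sets[OF assms(2) refl])

definition mixture :: "real \<Rightarrow> 'a measure \<Rightarrow> 'a measure \<Rightarrow> 'a measure" where
  "mixture l m1 m2 = measure_pmf (bernoulli_pmf l) \<bind> (\<lambda>b. if b then m1 else m2)"

lemma
  fixes m1 m2 :: "'a measure"
  assumes "prob_space m1" "prob_space m2" "sets m1 = sets N" "sets m2 = sets N" "0 \<le> l" "l \<le> 1"
  shows sets_mixture: "sets (mixture l m1 m2) = sets N"
    and prob_space_mixture: "prob_space (mixture l m1 m2)"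
    and integral_mixture: "\<And>f B. f \<in> borel_measurable N \<Longrightarrow> (\<And>x. \<bar>f x\<bar> \<le> B) \<Longrightarrow>
        integral\<^sup>L (mixture l m1 m2) f = l * integral\<^sup>L m1 f + (1 - l) * integral\<^sup>L m2 f"
proof -
  let ?N = "\<lambda>b. if b then m1 else m2"
  have sp: "subprob_space m1" "subprob_space m2"
    using assms prob_space_imp_subprob_space by auto
  have N: "?N \<in> measurable (measure_pmf (bernoulli_pmf l)) (subprob_algebra N)"
    using sp assms(3,4) by (auto simp: measurable_def space_subprob_algebra)
  show "sets (mixture l m1 m2) = sets N" unfolding mixture_def
    by (rule sets_bind) (use assms in auto)
  show "prob_space (mixture l m1 m2)" unfolding mixture_def
    by (rule measure_pmf.prob_space_bind[OF _ N]) (use assms in auto)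
  fix f :: "'a \<Rightarrow> real" and B
  assume f: "f \<in> borel_measurable N" "\<And>x. \<bar>f x\<bar> \<le> B"
  have "integral\<^sup>L (mixture l m1 m2) f = \<integral>b. integral\<^sup>L (?N b) f \<partial>measure_pmf (bernoulli_pmf l)"
    unfolding mixture_def
    by (rule integral_bind[where B'=1, OF f(1) f(2) N])
      (auto simp: sp subprob_space.subprob_emeasure_le_1 measure_pmf.finite_measure_axioms)
  then show "integral\<^sup>L (mixture l m1 m2) f = l * integral\<^sup>L m1 f + (1 - l) * integral\<^sup>L m2 f"
    using assms by simp
qed

lemma
  fixes m1 m2 :: "(real^'w::finite) measure"
  assumes m1: "m1 \<in> splits x" and m2: "m2 \<in> splits y" and l: "0 \<le> l" "l \<le> 1"
  shows measure_mixture_splits: "\<And>A. A \<in> sets borel \<Longrightarrow>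
        measure (mixture l m1 m2) A = l * measure m1 A + (1 - l) * measure m2 A"
    and integral_mixture_splits: "\<And>f B. f \<in> borel_measurable borel \<Longrightarrow>
        (\<And>q. q \<in> belief_simplex \<Longrightarrow> \<bar>f q\<bar> \<le> B) \<Longrightarrow>
        integral\<^sup>L (mixture l m1 m2) f = l * integral\<^sup>L m1 f + (1 - l) * integral\<^sup>L m2 f"
    and mixture_splits: "mixture l m1 m2 \<in> splits (l *\<^sub>R x + (1 - l) *\<^sub>R y)"
proof -
  note d1 = splitsD[OF m1] and d2 = splitsD[OF m2]
  have sets: "sets (mixture l m1 m2) = sets borel"
    by (rule sets_mixture[OF d1(2) d2(2) d1(1) d2(1) l])
  note integral = integral_mixture[OF d1(2) d2(2) d1(1) d2(1) l]
  interpret P: prob_space "mixture l m1 m2" by (rule prob_space_mixture[OF d1(2) d2(2) d1(1) d2(1) l])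
  interpret P1: prob_space m1 by (rule d1(2))
  interpret P2: prob_space m2 by (rule d2(2))
  show measure: "measure (mixture l m1 m2) A = l * measure m1 A + (1 - l) * measure m2 A"
    if A: "A \<in> sets borel" for A
    using integral[of "indicator A" 1] A sets d1(1) d2(1) by simp
  have "P.prob belief_simplex = 1"
    using measure[of belief_simplex] m1 m2 by (simp add: splits_def measure_def)
  then have AE: "AE q in mixture l m1 m2. q \<in> belief_simplex"
    using sets by (intro P.AE_prob_1) auto
  show general: "integral\<^sup>L (mixture l m1 m2) f = l * integral\<^sup>L m1 f + (1 - l) * integral\<^sup>L m2 f"
    if f: "f \<in> borel_measurable borel" and B: "\<And>q. q \<in> belief_simplex \<Longrightarrow> \<bar>f q\<bar> \<le> B" for f B
  proof -
    let ?g = "\<lambda>q. if q \<in> belief_simplex then f q else 0"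
    have "?g \<in> borel_measurable borel" using f by measurable
    moreover have "\<bar>?g q\<bar> \<le> \<bar>B\<bar>" for q using B[of q] by auto
    ultimately have "integral\<^sup>L (mixture l m1 m2) ?g = l * integral\<^sup>L m1 ?g + (1 - l) * integral\<^sup>L m2 ?g"
      by (rule integral)
    then show ?thesis
      using integral_eq_on_belief_simplex[OF AE sets f] integral_eq_on_belief_simplex[OF d1(3) d1(1) f]
        integral_eq_on_belief_simplex[OF d2(3) d2(1) f] by simp
  qed
  have integrable: "integrable (mixture l m1 m2) (\<lambda>q. q)"
    using AE norm_le_1_belief_simplex
    by (intro P.integrable_const_bound[where B=1]) (auto simp: measurable_cong_sets[OF sets refl])
  have "integral\<^sup>L (mixture l m1 m2) (\<lambda>q. q) $ w = (l *\<^sub>R x + (1 - l) *\<^sub>R y) $ w" for w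
  proof -
    have "\<bar>q $ w\<bar> \<le> 1" if "q \<in> belief_simplex" for q :: "real^'w"
      using component_le_norm_cart[of q w] norm_le_1_belief_simplex[OF that] by linarith
    then have "integral\<^sup>L (mixture l m1 m2) (\<lambda>q. q $ w) = l * integral\<^sup>L m1 (\<lambda>q. q $ w) + (1 - l) * integral\<^sup>L m2 (\<lambda>q. q $ w)"
      by (intro general) auto
    then show ?thesis
      using integral_vec_nth[OF integrable] integral_vec_nth[OF d1(4)] integral_vec_nth[OF d2(4)] d1(5) d2(5)
      by simp
  qed
  then have "integral\<^sup>L (mixture l m1 m2) (\<lambda>q. q) = l *\<^sub>R x + (1 - l) *\<^sub>R y"
    by (simp add: vec_eq_iff)
  moreover have "emeasure (mixture l m1 m2) belief_simplex = 1"
    using \<open>P.prob belief_simplex = 1\<close> by (simp add: P.emeasure_eq_measure)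
  ultimately show "mixture l m1 m2 \<in> splits (l *\<^sub>R x + (1 - l) *\<^sub>R y)"
    unfolding splits_def using sets P.prob_space_axioms integrable by simp
qed

definition dp_solution :: "real \<Rightarrow> real^'w^'w::finite \<Rightarrow> ('w \<Rightarrow> real) \<Rightarrow> (real^'w \<Rightarrow> real) \<Rightarrow> bool" where
  "dp_solution \<delta> M r V \<longleftrightarrow> (\<forall>q\<in>belief_simplex. (\<exists>\<mu>\<in>splits q. V q = dp_obj \<delta> M r V \<mu>)
                                          \<and> (\<forall>\<mu>\<in>splits q. dp_obj \<delta> M r V \<mu> \<le> V q))"

lemma dp_obj_mixture:
  assumes M: "stochastic M" and V: "V \<in> borel_measurable borel"
    and B: "\<And>q. q \<in> belief_simplex \<Longrightarrow> \<bar>V q\<bar> \<le> B"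
    and m1: "m1 \<in> splits x" and m2: "m2 \<in> splits y" and l: "0 \<le> l" "l \<le> 1"
  shows "dp_obj \<delta> M r V (mixture l m1 m2) = l * dp_obj \<delta> M r V m1 + (1 - l) * dp_obj \<delta> M r V m2"
proof -
  have "(\<lambda>q. V (phi M q)) \<in> borel_measurable borel" using V by measurable
  moreover have "\<bar>V (phi M q)\<bar> \<le> B" if "q \<in> belief_simplex" for q
    using B phi_belief_simplex[OF M that] by blast
  ultimately have integral: "integral\<^sup>L (mixture l m1 m2) (\<lambda>q. V (phi M q))
      = l * integral\<^sup>L m1 (\<lambda>q. V (phi M q)) + (1 - l) * integral\<^sup>L m2 (\<lambda>q. V (phi M q))"
    by (rule integral_mixture_splits[OF m1 m2 l])
  show ?thesis
    unfolding dp_obj_def measure_mixture_splits[OF m1 m2 l Iset_borel] integral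
    by (simp add: algebra_simps)
qed

lemma dp_solution_concave:
  fixes V :: "real^'w::finite \<Rightarrow> real"
  assumes "dp_solution \<delta> M r V" "stochastic M" "V \<in> borel_measurable borel"
    and "bounded (V ` belief_simplex)"
  shows "concave_on belief_simplex V"
  unfolding concave_on_iff
proof (intro conjI convex_belief_simplex ballI allI impI)
  fix x y :: "real^'w" and u v :: real
  assume x: "x \<in> belief_simplex" and y: "y \<in> belief_simplex" and uv: "0 \<le> u" "0 \<le> v" "u + v = 1"
  obtain B where B: "\<And>q. q \<in> belief_simplex \<Longrightarrow> \<bar>V q\<bar> \<le> B"
    using assms(4) unfolding bounded_real by auto
  obtain m1 where m1: "m1 \<in> splits x" "V x = dp_obj \<delta> M r V m1"
    using assms(1) x unfolding dp_solution_def by blast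
  obtain m2 where m2: "m2 \<in> splits y" "V y = dp_obj \<delta> M r V m2"
    using assms(1) y unfolding dp_solution_def by blast
  have l: "0 \<le> u" "u \<le> 1" and v: "v = 1 - u" using uv by auto
  have "u *\<^sub>R x + v *\<^sub>R y \<in> belief_simplex"
    using convex_belief_simplex x y uv by (rule convexD)
  then have "dp_obj \<delta> M r V (mixture u m1 m2) \<le> V (u *\<^sub>R x + v *\<^sub>R y)"
    using assms(1) mixture_splits[OF m1(1) m2(1) l] unfolding dp_solution_def v by blast
  then show "u * V x + v * V y \<le> V (u *\<^sub>R x + v *\<^sub>R y)"
    using dp_obj_mixture[OF assms(2,3) B m1(1) m2(1) l] m1(2) m2(2) v by simp
qed

lemma concave_on_linear_comp:
  assumes "linear f" "convex S" "f ` S \<subseteq> T" "concave_on T g"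
  shows "concave_on S (\<lambda>x. g (f x))"
  using assms unfolding concave_on_iff by (auto simp: linear_add linear_scale image_subset_iff)

lemma convex_strict_hypograph:
  assumes "concave_on D h"
  shows "convex {(x, t). x \<in> D \<and> t < h x}"
proof (rule convexI)
  fix z1 z2 :: "'a \<times> real" and u v :: real
  assume "z1 \<in> {(x, t). x \<in> D \<and> t < h x}" "z2 \<in> {(x, t). x \<in> D \<and> t < h x}"
    and uv: "0 \<le> u" "0 \<le> v" "u + v = 1"
  then obtain x1 t1 x2 t2 where z: "z1 = (x1, t1)" "z2 = (x2, t2)"
    and x: "x1 \<in> D" "x2 \<in> D" and t: "t1 < h x1" "t2 < h x2"
    by auto
  have "u * t1 + v * t2 < u * h x1 + v * h x2"
  proof (cases "u = 0")
    case False
    with uv t have "u * t1 < u * h x1" "v * t2 \<le> v * h x2" by (auto intro: mult_left_mono)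
    then show ?thesis by linarith
  qed (use uv t in simp)
  also have "\<dots> \<le> h (u *\<^sub>R x1 + v *\<^sub>R x2)"
    using assms x uv unfolding concave_on_iff by blast
  finally show "u *\<^sub>R z1 + v *\<^sub>R z2 \<in> {(x, t). x \<in> D \<and> t < h x}"
    using assms x uv z unfolding concave_on_iff by (auto intro: convexD)
qed

lemma concave_on_supergradient:
  fixes h :: "'a::euclidean_space \<Rightarrow> real"
  assumes conc: "concave_on D h" and "0 < e" and ball: "ball p e \<subseteq> D"
  obtains c where "\<And>x. x \<in> D \<Longrightarrow> h x \<le> h p + c \<bullet> (x - p)"
proof -
  have pD: "p \<in> D" using ball \<open>0 < e\<close> by auto
  let ?H = "(\<lambda>z. z - (p, h p)) ` {(x, t). x \<in> D \<and> t < h x}"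
  have "convex ?H" "0 \<notin> ?H"
    using convex_strict_hypograph[OF conc] by (auto simp: zero_prod_def)
  then obtain a where "a \<noteq> 0" and a: "\<forall>z\<in>?H. 0 \<le> a \<bullet> z"
    using separating_hyperplane_set_0 by blast
  then obtain c' \<beta> where c': "a = (c', \<beta>)" "(c', \<beta>) \<noteq> 0" by (cases a) auto
  have strict: "0 \<le> c' \<bullet> (x - p) + \<beta> * (t - h p)" if "x \<in> D" "t < h x" for x t
    using a that c'(1) by auto
  have "\<beta> \<le> 0" using strict[OF pD, of "h p - 1"] by simp
  have weak: "0 \<le> c' \<bullet> (x - p) + \<beta> * (h x - h p)" if x: "x \<in> D" for x
  proof (cases "\<beta> = 0")
    case True
    then show ?thesis using strict[OF x, of "h x - 1"] by simp
  next
    case False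
    with \<open>\<beta> \<le> 0\<close> have "\<beta> < 0" by simp
    show ?thesis
    proof (rule field_le_epsilon)
      fix \<epsilon> :: real assume "0 < \<epsilon>"
      with \<open>\<beta> < 0\<close> have "h x + \<epsilon> / \<beta> < h x" by (simp add: divide_pos_neg)
      from strict[OF x this] \<open>\<beta> < 0\<close>
      show "0 \<le> c' \<bullet> (x - p) + \<beta> * (h x - h p) + \<epsilon>" by (simp add: algebra_simps)
    qed
  qed
  have "\<beta> \<noteq> 0"
  proof
    assume "\<beta> = 0"
    with c'(2) have "c' \<noteq> 0" by (simp add: zero_prod_def)
    define k where "k = e / (2 * norm c')"
    have "0 < k" using \<open>c' \<noteq> 0\<close> \<open>0 < e\<close> by (simp add: k_def)
    have "dist p (p - k *\<^sub>R c') = e / 2"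
      using \<open>c' \<noteq> 0\<close> \<open>0 < e\<close> by (simp add: dist_norm k_def)
    then have "p - k *\<^sub>R c' \<in> D" using ball \<open>0 < e\<close> by auto
    from weak[OF this] \<open>\<beta> = 0\<close> have "k * (c' \<bullet> c') \<le> 0" by simp
    with \<open>0 < k\<close> have "c' \<bullet> c' \<le> 0" by (simp add: mult_le_0_iff)
    with \<open>c' \<noteq> 0\<close> show False using inner_gt_zero_iff[of c'] by linarith
  qed
  with \<open>\<beta> \<le> 0\<close> have "\<beta> < 0" by simp
  show ?thesis
  proof
    fix x assume "x \<in> D"
    with weak \<open>\<beta> < 0\<close> show "h x \<le> h p + ((- 1 / \<beta>) *\<^sub>R c') \<bullet> (x - p)"
      by (fastforce simp: field_simps)
  qed
qed

text \<open>An affine retraction fixing the face of the simplex supported on \<open>S\<close>; the preimage of the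
  simplex is a neighbourhood of every point of that face whose \<open>S\<close>-coordinates are all positive.\<close>

definition face_retraction :: "'w set \<Rightarrow> real^'w::finite \<Rightarrow> real^'w" where
  "face_retraction S x = (\<chi> w. if w \<in> S then x $ w + (1 - (\<Sum>v\<in>S. x $ v)) / card S else 0)"

lemma face_retraction_affine:
  assumes "u + v = 1"
  shows "face_retraction S (u *\<^sub>R x + v *\<^sub>R y) = u *\<^sub>R face_retraction S x + v *\<^sub>R face_retraction S y"
proof -
  have "(1 - (u * a + v * b)) / n = u * ((1 - a) / n) + v * ((1 - b) / n)" for a b n :: real
  proof -
    have "1 - (u * a + v * b) = u * (1 - a) + v * (1 - b)" using assms by (simp add: algebra_simps)
    then show ?thesis by (simp add: add_divide_distrib)
  qed
  then show ?thesis
    by (simp add: face_retraction_def vec_eq_iff sum.distrib distrib_left flip: sum_distrib_left)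
qed

lemma sum_face_retraction:
  assumes "S \<noteq> {}"
  shows "(\<Sum>w\<in>UNIV. face_retraction S x $ w) = 1"
proof -
  have "(\<Sum>w\<in>UNIV. face_retraction S x $ w) = (\<Sum>w\<in>S. x $ w + (1 - (\<Sum>v\<in>S. x $ v)) / card S)"
    by (simp add: face_retraction_def if_distrib sum.If_cases)
  also have "\<dots> = 1" using assms by (simp add: sum.distrib)
  finally show ?thesis .
qed

lemma face_retraction_id:
  assumes "(\<Sum>w\<in>UNIV. q $ w) = 1" "\<And>w. w \<notin> S \<Longrightarrow> q $ w = 0"
  shows "face_retraction S q = q"
proof -
  have "(\<Sum>w\<in>S. q $ w) = (\<Sum>w\<in>UNIV. q $ w)"
    using assms(2) by (intro sum.mono_neutral_left) auto
  then show ?thesis using assms by (auto simp: face_retraction_def vec_eq_iff)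
qed

lemma continuous_on_face_retraction: "continuous_on A (face_retraction S)"
  unfolding face_retraction_def
  apply (intro continuous_on_vec_lambda)
  subgoal for w by (cases "w \<in> S") (auto intro!: continuous_intros)
  done

lemma belief_simplex_face_supergradient:
  fixes g :: "real^'w::finite \<Rightarrow> real"
  assumes conc: "concave_on belief_simplex g" and p: "p \<in> belief_simplex"
  obtains c where "\<And>q. q \<in> belief_simplex \<Longrightarrow> (\<And>w. p $ w = 0 \<Longrightarrow> q $ w = 0) \<Longrightarrow>
    g q \<le> g p + c \<bullet> (q - p)"
proof -
  define S where "S = {w. p $ w \<noteq> 0}"
  let ?A = "face_retraction S"
  define D where "D = ?A -` belief_simplex"
  have "S \<noteq> {}"
  proof
    assume "S = {}"
    then have "(\<Sum>w\<in>UNIV. p $ w) = 0" by (simp add: S_def)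
    with p show False by (simp add: belief_simplex_def)
  qed
  have A_face: "?A q = q" if "q \<in> belief_simplex" "\<And>w. p $ w = 0 \<Longrightarrow> q $ w = 0" for q
    using that by (intro face_retraction_id) (auto simp: S_def belief_simplex_def)
  have "concave_on D (\<lambda>x. g (?A x))"
    unfolding concave_on_iff
  proof (intro conjI convexI ballI allI impI)
    fix x y :: "real^'w" and u v :: real assume "x \<in> D" "y \<in> D" "0 \<le> u" "0 \<le> v" "u + v = 1"
    then show "u *\<^sub>R x + v *\<^sub>R y \<in> D"
      and "u * g (?A x) + v * g (?A y) \<le> g (?A (u *\<^sub>R x + v *\<^sub>R y))"
      using conc convex_belief_simplex unfolding concave_on_iff D_def
      by (auto simp: face_retraction_affine intro: convexD)
  qed
  moreover obtain e where "0 < e" "ball p e \<subseteq> D"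
  proof -
    define U where "U = (\<Inter>w\<in>S. {x. 0 < ?A x $ w})"
    have "open U"
      unfolding U_def
      by (intro open_INT ballI open_Collect_less finite continuous_on_const continuous_on_component
          continuous_on_face_retraction)
    moreover have "p \<in> U"
      using A_face[OF p] p by (auto simp: U_def S_def belief_simplex_def order.strict_iff_order)
    ultimately obtain e where "0 < e" "ball p e \<subseteq> U"
      using open_contains_ball by blast
    moreover have "U \<subseteq> D"
      using sum_face_retraction[OF \<open>S \<noteq> {}\<close>]
      by (auto simp: U_def D_def belief_simplex_def face_retraction_def less_imp_le)
    ultimately show ?thesis using that by blast
  qed
  ultimately obtain c where c: "\<And>x. x \<in> D \<Longrightarrow> g (?A x) \<le> g (?A p) + c \<bullet> (x - p)"
    using concave_on_supergradient by blast
  show ?thesis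
  proof
    fix q assume q: "q \<in> belief_simplex" "\<And>w. p $ w = 0 \<Longrightarrow> q $ w = 0"
    then have "q \<in> D" by (simp add: D_def A_face)
    then show "g q \<le> g p + c \<bullet> (q - p)"
      using c A_face[OF q] A_face[OF p] by fastforce
  qed
qed

lemma splits_AE_face:
  assumes "\<mu> \<in> splits p"
  shows "AE q in \<mu>. \<forall>w. p $ w = 0 \<longrightarrow> q $ w = 0"
proof -
  note d = splitsD[OF assms]
  have "AE q in \<mu>. q $ w = 0" if "p $ w = 0" for w
  proof -
    have "integrable \<mu> (\<lambda>q. q $ w)"
      using integrable_inner_right[OF d(4), of "axis w 1"] by (simp add: cart_eq_inner_axis inner_commute)
    moreover have "AE q in \<mu>. 0 \<le> q $ w"
      using d(3) by eventually_elim (simp add: belief_simplex_def)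
    moreover have "integral\<^sup>L \<mu> (\<lambda>q. q $ w) = 0"
      using integral_vec_nth[OF d(4), of w] d(5) that by simp
    ultimately show ?thesis by (simp add: integral_nonneg_eq_0_iff_AE)
  qed
  then show ?thesis by (simp add: AE_all_countable)
qed

lemma integral_le_concave_splits:
  fixes g :: "real^'w::finite \<Rightarrow> real"
  assumes conc: "concave_on belief_simplex g" and g: "g \<in> borel_measurable borel"
    and B: "\<And>q. q \<in> belief_simplex \<Longrightarrow> \<bar>g q\<bar> \<le> B"
    and \<mu>: "\<mu> \<in> splits p" and p: "p \<in> belief_simplex"
  shows "integral\<^sup>L \<mu> g \<le> g p"
proof -
  note d = splitsD[OF \<mu>]
  interpret prob_space \<mu> by (rule d(2))
  obtain c where c: "\<And>q. q \<in> belief_simplex \<Longrightarrow> (\<And>w. p $ w = 0 \<Longrightarrow> q $ w = 0) \<Longrightarrow>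
      g q \<le> g p + c \<bullet> (q - p)"
    using belief_simplex_face_supergradient[OF conc p] by blast
  have "AE q in \<mu>. g q \<le> g p + c \<bullet> q - c \<bullet> p"
    using d(3) splits_AE_face[OF \<mu>] by eventually_elim (auto dest!: c simp: inner_diff_right)
  moreover have "integrable \<mu> g"
    using d(3) B by (intro integrable_const_bound[where B=B])
      (auto simp: measurable_cong_sets[OF d(1) refl] g)
  moreover have "integrable \<mu> (\<lambda>q. g p + c \<bullet> q - c \<bullet> p)"
    using d(4) by auto
  ultimately have "integral\<^sup>L \<mu> g \<le> integral\<^sup>L \<mu> (\<lambda>q. g p + c \<bullet> q - c \<bullet> p)"
    by (intro integral_mono_AE)
  also have "\<dots> = g p"
    using d(4,5) by (simp add: integral_inner_right prob_space)
  finally show ?thesis .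
qed

lemma dp_obj_return:
  assumes "p \<in> Iset r" "V \<in> borel_measurable borel"
  shows "dp_obj \<delta> M r V (return borel p) = (1 - \<delta>) + \<delta> * V (phi M p)"
proof -
  have "(\<lambda>q. V (phi M q)) \<in> borel_measurable borel" using assms(2) by measurable
  then show ?thesis
    using assms(1) by (simp add: dp_obj_def measure_return integral_return)
qed

lemma dp_solution_upper_bound:
  fixes V :: "real^'w::finite \<Rightarrow> real"
  assumes dp: "dp_solution \<delta> M r V" and M: "stochastic M" and V: "V \<in> borel_measurable borel"
    and bounded: "bounded (V ` belief_simplex)" and \<delta>: "0 \<le> \<delta>" "\<delta> \<le> 1"
    and p: "p \<in> belief_simplex"
  shows "V p \<le> (1 - \<delta>) + \<delta> * V (phi M p)"
proof -
  obtain B where B: "\<And>q. q \<in> belief_simplex \<Longrightarrow> \<bar>V q\<bar> \<le> B"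
    using bounded unfolding bounded_real by auto
  have "concave_on belief_simplex (\<lambda>q. V (phi M q))"
    using phi_belief_simplex[OF M]
    by (intro concave_on_linear_comp[OF linear_phi convex_belief_simplex _
          dp_solution_concave[OF dp M V bounded]]) auto
  moreover obtain \<mu> where \<mu>: "\<mu> \<in> splits p" "V p = dp_obj \<delta> M r V \<mu>"
    using dp p unfolding dp_solution_def by blast
  ultimately have "integral\<^sup>L \<mu> (\<lambda>q. V (phi M q)) \<le> V (phi M p)"
    using V B phi_belief_simplex[OF M] p
    by (intro integral_le_concave_splits[where B=B]) auto
  moreover have "measure \<mu> (Iset r) \<le> 1"
    using splitsD(2)[OF \<mu>(1)] by (simp add: prob_space.prob_le_1)
  ultimately have "V p \<le> (1 - \<delta>) * 1 + \<delta> * V (phi M p)"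
    unfolding \<mu>(2) dp_obj_def using \<delta> by (intro add_mono mult_left_mono) auto
  then show ?thesis by simp
qed

theorem corollary1:
  fixes M :: "real^'w^'w::finite" and r :: "'w \<Rightarrow> real" and \<delta> :: real
    and V :: "real^'w \<Rightarrow> real" and p :: "real^'w"
  assumes "stochastic M" and "irreducible_chain M"
    and "0 \<le> \<delta>" and "\<delta> < 1"
    and "V \<in> borel_measurable borel" and "bounded (V ` belief_simplex)"
    and "\<forall>q\<in>belief_simplex. (\<exists>\<mu>\<in>splits q. V q = dp_obj \<delta> M r V \<mu>)
                     \<and> (\<forall>\<mu>\<in>splits q. dp_obj \<delta> M r V \<mu> \<le> V q)"
    and "p \<in> Iset r"
  shows "return borel p \<in> splits p \<and> V p = dp_obj \<delta> M r V (return borel p)"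
proof -
  have dp: "dp_solution \<delta> M r V" using assms(7) by (simp add: dp_solution_def)
  have p: "p \<in> belief_simplex" using assms(8) by (simp add: Iset_def)
  have splits: "return borel p \<in> splits p" using p by (rule return_splits)
  have "V p \<le> dp_obj \<delta> M r V (return borel p)"
    using dp_solution_upper_bound[OF dp assms(1,5,6,3) _ p] assms(4,5,8) by (simp add: dp_obj_return)
  moreover have "dp_obj \<delta> M r V (return borel p) \<le> V p"
    using dp p splits unfolding dp_solution_def by blast
  ultimately show ?thesis using splits by simp
qed

end
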